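(* Let $n,m\in\mathbb Z$, $k\le n+m$, and $a,b,q,p\in\mathbb C$ with $|p|<1$. Then \[ \binom{n+m}{k}_{a,b;q,p}=\sum_{j=k-m}^{n}\binom nj_{a,b;q,p}\binom{m}{k-j}_{aq^{2n-j},bq^{n+j};q,p}\prod_{i=1}^{k-j}W_{a,b;q,p}(i+j,n-j). \]
   Context: $\theta(x;p)=\prod_{j\ge0}(1-p^jx)(1-p^{j+1}/x)$, $\theta(x_1,\dots,x_\ell;p)=\prod_i\theta(x_i;p)$; parameters are such that denominators below do not vanish. Sum convention: $\sum_{j=l}^mA_j=A_l+\dots+A_m$ if $m>l-1$, $0$ if $m=l-1$, $-A_{l-1}-\dots-A_{m+1}$ if $m<l-1$. Product convention: $\prod_{j=l}^mA_j=A_l\cdots A_m$ if $m>l-1$, $1$ if $m=l-1$, $A_{l-1}^{-1}\cdots A_{m+1}^{-1}$ if $m<l-1$. For parameters $(a,b)$: $w_{a,b;q,p}(s,t)=\frac{\theta(aq^{s+2t},bq^{2s+t-2},aq^{t-s-1}/b;p)}{\theta(aq^{s+2t-2},bq^{2s+t},aq^{t-s+1}/b;p)}q$, $W_{a,b;q,p}(s,t)=\prod_{j=1}^tw_{a,b;q,p}(s,j)$, and $\binom nk_{a,b;q,p}$ ($n,k\in\mathbb Z$) is the unique family with $\binom n0_{a,b;q,p}=\binom nn_{a,b;q,p}=1$ and $\binom{n+1}k_{a,b;q,p}=\binom nk_{a,b;q,p}+\binom n{k-1}_{a,b;q,p}W_{a,b;q,p}(k,n+1-k)$ for $(n+1,k)\ne(0,0)$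 (closed form $\frac{(q^{1+k},aq^{1+k},bq^{1+k},aq^{1-k}/b;q,p)_{n-k}}{(q,aq,bq^{1+2k},aq/b;q,p)_{n-k}}$ with $(x;q,p)_r=\prod_{i=0}^{r-1}\theta(xq^i;p)$). The coefficient $\binom{\cdot}{\cdot}_{aq^{2n-j},bq^{n+j};q,p}$ is this with $(a,b)$ replaced by $(aq^{2n-j},bq^{n+j})$. *)

theory Defs
  imports "HOL-Analysis.Analysis"
begin

definition theta :: "complex \<Rightarrow> complex \<Rightarrow> complex" where
  "theta p x = (\<Prod>j. (1 - p ^ j * x) * (1 - p ^ (Suc j) / x))"

definition gsum :: "int \<Rightarrow> int \<Rightarrow> (int \<Rightarrow> complex) \<Rightarrow> complex" where
  "gsum l m A =
     (if m > l - 1 then (\<Sum>j\<in>{l..m}. A j)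
      else if m = l - 1 then 0
      else - (\<Sum>j\<in>{m+1..l-1}. A j))"

definition gprod :: "int \<Rightarrow> int \<Rightarrow> (int \<Rightarrow> complex) \<Rightarrow> complex" where
  "gprod l m A =
     (if m > l - 1 then (\<Prod>j\<in>{l..m}. A j)
      else if m = l - 1 then 1
      else (\<Prod>j\<in>{m+1..l-1}. inverse (A j)))"

definition ew :: "complex \<Rightarrow> complex \<Rightarrow> complex \<Rightarrow> complex \<Rightarrow> int \<Rightarrow> int \<Rightarrow> complex" where
  "ew a b q p s t =
     (theta p (a * q powi (s + 2 * t)) * theta p (b * q powi (2 * s + t - 2))
        * theta p (a * q powi (t - s - 1) / b))
     / (theta p (a * q powi (s + 2 * t - 2)) * theta p (b * q powi (2 * s + t))
        * theta p (a * q powi (t - s + 1) / b)) * q"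

definition eW :: "complex \<Rightarrow> complex \<Rightarrow> complex \<Rightarrow> complex \<Rightarrow> int \<Rightarrow> int \<Rightarrow> complex" where
  "eW a b q p s t = gprod 1 t (\<lambda>j. ew a b q p s j)"

definition ebinom_family :: "complex \<Rightarrow> complex \<Rightarrow> complex \<Rightarrow> complex \<Rightarrow> (int \<Rightarrow> int \<Rightarrow> complex) \<Rightarrow> bool" where
  "ebinom_family a b q p f \<longleftrightarrow>
     (\<forall>n. f n 0 = 1) \<and> (\<forall>n. f n n = 1) \<and>
     (\<forall>n k. (n + 1, k) \<noteq> (0, 0) \<longrightarrow>
        f (n + 1) k = f n k + f n (k - 1) * eW a b q p k (n + 1 - k))"

definition ebinom :: "complex \<Rightarrow> complex \<Rightarrow> complex \<Rightarrow> complex \<Rightarrow> int \<Rightarrow> int \<Rightarrow> complex" where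
  "ebinom a b q p n k = (THE f. ebinom_family a b q p f) n k"

end

theory Submission
  imports Defs
begin

text \<open>Only the recursion matters.  For nonvanishing weights \<open>w(s,i)\<close> and
  \<open>W(s,t) = w(s,1) \<cdots> w(s,t)\<close>, the boundary values and the recursion determine a unique
  family indexed by all integer pairs: rows \<open>n \<ge> 0\<close> are built forwards and rows \<open>n < 0\<close>
  backwards, each by solving a first-order linear recurrence in \<open>k\<close>.  The parameters
  \<open>(a q^(2n-j), b q^(n+j))\<close> have the shifted weights \<open>w\<^sub>j(s,i) = w(s+j, i+n-j)\<close>, so that
  \<open>W(k, n+m+1-k) = W(k, n-j) W\<^sub>j(k-j, m+1-k+j)\<close>.  With this splitting, the recursion in \<open>m\<close>
  of the shifted coefficients makes the right-hand side \<open>R(m,k)\<close> satisfy the recursion of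
  row \<open>n+m\<close> on the triangle \<open>k \<le> n+m\<close>.  Since \<open>R(0,k)\<close> is row \<open>n\<close> and \<open>R(m,n+m) = 1\<close>, the
  two sides agree on the whole triangle, for \<open>m\<close> going up as well as down.\<close>

section \<open>Sums and products with integer bounds\<close>

lemma gprod_empty [simp]: "gprod 1 0 A = 1"
  by (simp add: gprod_def)

lemma gprod_const_1 [simp]: "gprod l m (\<lambda>_. 1) = 1"
  by (simp add: gprod_def)

lemma gprod_nonzero: "(\<And>j. A j \<noteq> 0) \<Longrightarrow> gprod l m A \<noteq> 0"
  by (simp add: gprod_def)

lemma gprod_last:
  assumes "\<And>j. A j \<noteq> 0"
  shows "gprod l m A = gprod l (m - 1) A * A m"
proof -
  consider "m > l" | "m = l" | "m = l - 1" | "m < l - 1" by linarith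
  then show ?thesis
  proof cases
    case 1
    then have "{l..m} = insert m {l..m-1}" by auto
    with 1 show ?thesis by (simp add: gprod_def mult.commute)
  next
    case 4
    then have "{m..l-1} = insert m {m+1..l-1}" by auto
    with 4 assms show ?thesis by (simp add: gprod_def)
  qed (use assms in \<open>simp_all add: gprod_def\<close>)
qed

lemma gprod_add:
  assumes "\<And>j. A j \<noteq> 0"
  shows "gprod 1 (a + b) A = gprod 1 a A * gprod 1 b (\<lambda>i. A (i + a))"
proof (induction b rule: int_induct[where k = 0])
  case (step1 i)
  then show ?case
    using gprod_last[of A 1 "a + i + 1"] gprod_last[of "\<lambda>i. A (i + a)" 1 "i + 1"] assms
    by (simp add: ac_simps)
next
  case (step2 i)
  have "gprod 1 (a + i) A = gprod 1 (a + i - 1) A * A (a + i)"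
    using gprod_last[of A 1 "a + i", OF assms] .
  moreover have "gprod 1 i (\<lambda>i. A (i + a)) = gprod 1 (i - 1) (\<lambda>i. A (i + a)) * A (a + i)"
    using gprod_last[of "\<lambda>i. A (i + a)" 1 i] assms by (simp add: ac_simps)
  ultimately show ?case
    using step2.IH assms[of "a + i"] by (simp add: add_diff_eq)
qed simp

lemma gsum_first: "gsum l n A = A l + gsum (l + 1) n A"
proof -
  consider "n > l" | "n = l" | "n = l - 1" | "n < l - 1" by linarith
  then show ?thesis
  proof cases
    case 1
    then have "{l..n} = insert l {l+1..n}" by auto
    with 1 show ?thesis by (simp add: gsum_def)
  next
    case 4
    then have "{n+1..l} = insert l {n+1..l-1}" by auto
    with 4 show ?thesis by (simp add: gsum_def)
  qed (simp_all add: gsum_def)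
qed

lemma gsum_singleton: "gsum n n A = A n"
  by (simp add: gsum_def)

lemma gsum_delta: "k \<le> n \<Longrightarrow> gsum k n (\<lambda>j. if j = k then c else 0) = c"
  by (simp add: gsum_def)

lemma gsum_zero [simp]: "gsum l n (\<lambda>_. 0) = 0"
  by (simp add: gsum_def)

lemma gsum_add: "gsum l n (\<lambda>j. A j + B j) = gsum l n A + gsum l n B"
  by (simp add: gsum_def sum.distrib)

lemma gsum_diff: "gsum l n (\<lambda>j. A j - B j) = gsum l n A - gsum l n B"
  by (simp add: gsum_def sum_subtractf)

lemma gsum_mult_right: "gsum l n (\<lambda>j. A j * c) = gsum l n A * c"
  by (simp add: gsum_def sum_distrib_right)

section \<open>First-order linear recurrences\<close>

lemma linear_recurrence_unique:
  fixes x x' y c :: "int \<Rightarrow> complex"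
  assumes c: "\<And>k. c k \<noteq> 0"
    and x: "\<And>k. k \<noteq> 0 \<Longrightarrow> y k = x k + x (k - 1) * c k"
    and x': "\<And>k. k \<noteq> 0 \<Longrightarrow> y k = x' k + x' (k - 1) * c k"
    and "x 0 = x' 0" and "x (-1) = x' (-1)"
  shows "x = x'"
proof
  fix k
  show "x k = x' k"
  proof (cases "0 \<le> k")
    case True
    then show ?thesis
    proof (induction k rule: int_ge_induct)
      case (step i)
      then show ?case using x[of "i + 1"] x'[of "i + 1"] by simp
    qed (fact \<open>x 0 = x' 0\<close>)
  next
    case False
    then have "k \<le> -1" by simp
    then show ?thesis
    proof (induction k rule: int_le_induct)
      case (step i)
      then have "i \<noteq> 0" by simp
      have "x (i - 1) * c i = y i - x i" using x[OF \<open>i \<noteq> 0\<close>] by simp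
      moreover have "x' (i - 1) * c i = y i - x' i" using x'[OF \<open>i \<noteq> 0\<close>] by simp
      ultimately show ?case using step.IH c[of i] by (metis mult_right_cancel)
    qed (fact \<open>x (-1) = x' (-1)\<close>)
  qed
qed

function recurrence_solution ::
    "(int \<Rightarrow> complex) \<Rightarrow> (int \<Rightarrow> complex) \<Rightarrow> complex \<Rightarrow> int \<Rightarrow> complex" where
  "recurrence_solution c y v k =
     (if k = 0 then 1 else if k = -1 then v
      else if 0 < k then y k - recurrence_solution c y v (k - 1) * c k
      else (y (k + 1) - recurrence_solution c y v (k + 1)) / c (k + 1))"
  by auto
termination by (relation "Wellfounded.measure (\<lambda>(c, y, v, k). nat \<bar>k\<bar>)") auto

declare recurrence_solution.simps [simp del]

lemma recurrence_solution_0 [simp]: "recurrence_solution c y v 0 = 1"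
  and recurrence_solution_minus_1 [simp]: "recurrence_solution c y v (-1) = v"
  by (simp_all add: recurrence_solution.simps)

lemma recurrence_solution_pos:
  "0 < k \<Longrightarrow> recurrence_solution c y v k = y k - recurrence_solution c y v (k - 1) * c k"
  by (simp add: recurrence_solution.simps)

lemma recurrence_solution_neg:
  "k < -1 \<Longrightarrow> recurrence_solution c y v k = (y (k + 1) - recurrence_solution c y v (k + 1)) / c (k + 1)"
  by (subst recurrence_solution.simps) simp

lemma recurrence_solution_rec:
  assumes "\<And>k. c k \<noteq> 0" and "k \<noteq> 0"
  shows "y k = recurrence_solution c y v k + recurrence_solution c y v (k - 1) * c k"
proof (cases "0 < k")
  case True
  then show ?thesis by (simp add: recurrence_solution_pos)
next
  case False
  with assms show ?thesis by (simp add: recurrence_solution_neg)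
qed

lemma lower_triangle_eq:
  fixes g h :: "int \<Rightarrow> int \<Rightarrow> complex"
  assumes W: "\<And>s t. W s t \<noteq> 0"
    and g_rec: "\<And>N k. k \<le> N \<Longrightarrow> g (N + 1) k = g N k + g N (k - 1) * W k (N + 1 - k)"
    and h_rec: "\<And>N k. k \<le> N \<Longrightarrow> h (N + 1) k = h N k + h N (k - 1) * W k (N + 1 - k)"
    and diag: "\<And>N. g N N = h N N"
    and row: "\<And>k. k \<le> n \<Longrightarrow> g n k = h n k"
  shows "k \<le> N \<Longrightarrow> g N k = h N k"
proof (induction N arbitrary: k rule: int_induct[where k = n])
  case base
  then show ?case by (rule row)
next
  case (step1 i)
  show ?case
  proof (cases "k = i + 1")
    case True
    then show ?thesis using diag by simp
  next
    case False
    with step1.prems have "k \<le> i" by simp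
    then show ?thesis using g_rec h_rec step1.IH by simp
  qed
next
  case (step2 i)
  have "g (i - 1) k = h (i - 1) k" if "k \<le> i - 1" for k
    using that
  proof (induction k rule: int_le_induct)
    case base
    then show ?case using diag by simp
  next
    case (step j)
    have "g (i - 1) (j - 1) * W j (i - j) = h (i - 1) (j - 1) * W j (i - j)"
      using g_rec[of j "i - 1"] h_rec[of j "i - 1"] step2.IH[of j] step.IH step.hyps by simp
    then show ?case using W by simp
  qed
  then show ?case using step2.prems by blast
qed

section \<open>Binomial families\<close>

definition binomial_family :: "(int \<Rightarrow> int \<Rightarrow> complex) \<Rightarrow> (int \<Rightarrow> int \<Rightarrow> complex) \<Rightarrow> bool" where
  "binomial_family W f \<longleftrightarrow>
     (\<forall>n. f n 0 = 1) \<and> (\<forall>n. f n n = 1) \<and>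
     (\<forall>n k. (n + 1, k) \<noteq> (0, 0) \<longrightarrow> f (n + 1) k = f n k + f n (k - 1) * W k (n + 1 - k))"

lemma family_col_0: "binomial_family W f \<Longrightarrow> f n 0 = 1"
  and family_diag: "binomial_family W f \<Longrightarrow> f n n = 1"
  and family_rec: "binomial_family W f \<Longrightarrow> (n + 1, k) \<noteq> (0, 0) \<Longrightarrow>
     f (n + 1) k = f n k + f n (k - 1) * W k (n + 1 - k)"
  by (simp_all add: binomial_family_def)

locale binomial_weights =
  fixes W :: "int \<Rightarrow> int \<Rightarrow> complex"
  assumes W_nonzero: "W s t \<noteq> 0"
    and W_0 [simp]: "W s 0 = 1"
begin

lemma family_above_diag:
  assumes f: "binomial_family W f" and "n \<noteq> -1"
  shows "f n (n + 1) = 0"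
  using family_rec[OF f, of n "n + 1"] family_diag[OF f, of n] family_diag[OF f, of "n + 1"] assms(2)
  by simp

lemma family_vanishes_above:
  assumes f: "binomial_family W f" and "0 \<le> n" and "n < k"
  shows "f n k = 0"
proof -
  have "0 \<le> n \<Longrightarrow> f n (n + 1 + int d) = 0" for d n
  proof (induction d arbitrary: n)
    case 0
    then show ?case using family_above_diag[OF f] by simp
  next
    case (Suc d)
    have "f (n + 1) (n + 1 + 1 + int d) = 0" and "f n (n + 1 + int d) = 0"
      using Suc.IH[of "n + 1"] Suc.IH[of n] Suc.prems by simp_all
    then show ?case using family_rec[OF f, of n "n + 1 + int (Suc d)"] \<open>0 \<le> n\<close>
      by (simp add: ac_simps)
  qed
  from this[of n "nat (k - n - 1)"] assms(2,3) show ?thesis by simp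
qed

lemma family_vanishes_below:
  assumes f: "binomial_family W f" and "0 \<le> n" and "k < 0"
  shows "f n k = 0"
proof -
  have "0 \<le> n \<Longrightarrow> f n (-1 - int d) = 0" for d n
  proof (induction d arbitrary: n)
    case 0
    then show ?case
      using family_rec[OF f, of n 0] family_col_0[OF f] W_nonzero by simp
  next
    case (Suc d)
    have "f (n + 1) (-1 - int d) = 0" and "f n (-1 - int d) = 0"
      using Suc.IH[of "n + 1"] Suc.IH[of n] Suc.prems by simp_all
    then show ?case
      using family_rec[OF f, of n "-1 - int d"] \<open>0 \<le> n\<close> W_nonzero by (simp add: algebra_simps)
  qed
  from this[of n "nat (- k - 1)"] assms(2,3) show ?thesis by simp
qed

lemma family_row_0:
  assumes "binomial_family W f"
  shows "f 0 k = (if k = 0 then 1 else 0)"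
  using family_col_0[OF assms] family_vanishes_above[OF assms] family_vanishes_below[OF assms]
  by (cases k "0::int" rule: linorder_cases) auto

lemma family_unique:
  assumes f: "binomial_family W f" and g: "binomial_family W g"
  shows "f = g"
proof
  fix n
  show "f n = g n"
  proof (induction n rule: int_induct[where k = 0])
    case base
    then show ?case using family_row_0[OF f] family_row_0[OF g] by auto
  next
    case (step1 i)
    then show ?case using family_rec[OF f, of i] family_rec[OF g, of i] by auto
  next
    case (step2 i)
    define c where "c k = W k (i - k)" for k
    have rec: "h i k = h (i - 1) k + h (i - 1) (k - 1) * c k"
      if "binomial_family W h" and "k \<noteq> 0" for h k
      using family_rec[OF that(1), of "i - 1" k] that(2) by (simp add: c_def)
    have "f (i - 1) (-1) = g (i - 1) (-1)"
    proof (cases "i = 0")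
      case True
      then show ?thesis using family_diag[OF f] family_diag[OF g] by simp
    next
      case False
      have vanish: "h (i - 1) (-1) = 0" if "binomial_family W h" for h
        using family_rec[OF that, of "i - 1" 0] family_col_0[OF that] W_nonzero False by simp
      show ?thesis using vanish[OF f] vanish[OF g] by simp
    qed
    then show ?case
      using linear_recurrence_unique[of c "f i" "f (i - 1)" "g (i - 1)"] rec[OF f] rec[OF g]
        step2.IH family_col_0[OF f] family_col_0[OF g] W_nonzero
      by (simp add: c_def)
  qed
qed

text \<open>Rows with \<open>n < 0\<close> are solved backwards from row \<open>n + 1\<close>, which fixes them once
  \<open>f n (-1)\<close> is known.  For \<open>n \<le> -2\<close> the recursion at \<open>k = 0\<close> forces \<open>f n (-1) = 0\<close>;
  at \<open>n = -1\<close> that instance of the recursion is exempt and the diagonal condition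
  \<open>f (-1) (-1) = 1\<close> takes its place.\<close>

function recursive_family :: "int \<Rightarrow> int \<Rightarrow> complex" where
  "recursive_family n =
     (if n = 0 then (\<lambda>k. if k = 0 then 1 else 0)
      else if 0 < n then
        (\<lambda>k. recursive_family (n - 1) k + recursive_family (n - 1) (k - 1) * W k (n - k))
      else recurrence_solution (\<lambda>k. W k (n + 1 - k)) (recursive_family (n + 1))
        (if n = -1 then 1 else 0))"
  by auto
termination by (relation "Wellfounded.measure (\<lambda>n. nat \<bar>n\<bar>)") auto

declare recursive_family.simps [simp del]

lemma recursive_family_0: "recursive_family 0 k = (if k = 0 then 1 else 0)"
  by (simp add: recursive_family.simps)

lemma recursive_family_pos:
  "0 < n \<Longrightarrow>
    recursive_family n k = recursive_family (n - 1) k + recursive_family (n - 1) (k - 1) * W k (n - k)"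
  by (subst recursive_family.simps) simp

lemma recursive_family_neg:
  "n < 0 \<Longrightarrow> recursive_family n k =
    recurrence_solution (\<lambda>k. W k (n + 1 - k)) (recursive_family (n + 1)) (if n = -1 then 1 else 0) k"
  by (subst recursive_family.simps) simp

lemma recursive_family_nonneg_vanishes:
  "0 \<le> n \<Longrightarrow> k < 0 \<or> n < k \<Longrightarrow> recursive_family n k = 0"
proof (induction n arbitrary: k rule: int_ge_induct)
  case base
  then show ?case by (auto simp: recursive_family_0)
next
  case (step i)
  then show ?case
    using step.IH[of k] step.IH[of "k - 1"] by (auto simp: recursive_family_pos)
qed

lemma recursive_family_nonneg_col_0_diag:
  "0 \<le> n \<Longrightarrow> recursive_family n 0 = 1 \<and> recursive_family n n = 1"
proof (induction n rule: int_ge_induct)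
  case base
  then show ?case by (simp add: recursive_family_0)
next
  case (step i)
  then show ?case by (simp add: recursive_family_pos recursive_family_nonneg_vanishes)
qed

lemma recursive_family_neg_diag:
  "n \<le> -1 \<Longrightarrow> recursive_family n n = 1 \<and> (\<forall>k. n < k \<and> k < 0 \<longrightarrow> recursive_family n k = 0)"
proof (induction n rule: int_le_induct)
  case base
  then show ?case by (auto simp: recursive_family_neg)
next
  case (step i)
  define c where "c = (\<lambda>k. W k (i - k))"
  have c: "c k \<noteq> 0" for k by (simp add: c_def W_nonzero)
  define x where "x = recursive_family (i - 1)"
  have x: "x = recurrence_solution c (recursive_family i) 0"
    using step.hyps by (simp add: fun_eq_iff x_def c_def recursive_family_neg)
  have rec: "recursive_family i k = x k + x (k - 1) * c k" if "k \<noteq> 0" for k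
    unfolding x using recurrence_solution_rec[OF c that] .
  have between: "recursive_family i k = 0" if "i < k" and "k < 0" for k
    using step.IH that by blast
  have zero: "i \<le> k \<longrightarrow> x k = 0" if "k \<le> -1" for k
    using that
  proof (induction k rule: int_le_induct)
    case base
    then show ?case by (simp add: x)
  next
    case (step j)
    then show ?case using rec[of j] between[of j] c[of j] by auto
  qed
  have "x (i - 1) = 1"
    using rec[of i] zero[of i] step.hyps step.IH by (simp add: c_def)
  then show ?case using zero by (auto simp: x_def)
qed

lemma recursive_family_col_0: "recursive_family n 0 = 1"
  using recursive_family_nonneg_col_0_diag[of n] by (cases "0 \<le> n") (simp_all add: recursive_family_neg)

lemma recursive_family_is_family: "binomial_family W recursive_family"
  unfolding binomial_family_def
proof (intro conjI allI impI)
  fix n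
  show "recursive_family n 0 = 1" by (rule recursive_family_col_0)
  show "recursive_family n n = 1"
    using recursive_family_nonneg_col_0_diag[of n] recursive_family_neg_diag[of n] by fastforce
next
  fix n k :: int
  assume nk: "(n + 1, k) \<noteq> (0, 0)"
  show "recursive_family (n + 1) k = recursive_family n k + recursive_family n (k - 1) * W k (n + 1 - k)"
  proof (cases "0 \<le> n")
    case True
    then show ?thesis by (simp add: recursive_family_pos)
  next
    case False
    define c where "c = (\<lambda>j. W j (n + 1 - j))"
    define v :: complex where "v = (if n = -1 then 1 else 0)"
    have c: "c j \<noteq> 0" for j by (simp add: c_def W_nonzero)
    have row: "recursive_family n j = recurrence_solution c (recursive_family (n + 1)) v j" for j
      using False by (simp add: recursive_family_neg c_def v_def)
    show ?thesis
    proof (cases "k = 0")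
      case True
      with nk have "v = 0" by (simp add: v_def)
      with True show ?thesis by (simp add: row recursive_family_col_0)
    next
      case False
      show ?thesis using recurrence_solution_rec[OF c False] by (simp add: row c_def)
    qed
  qed
qed

lemma the_family: "binomial_family W (THE f. binomial_family W f)"
  using theI[of "binomial_family W", OF recursive_family_is_family] recursive_family_is_family family_unique
  by blast

end

section \<open>The convolution formula for product weights\<close>

definition prod_weight :: "(int \<Rightarrow> int \<Rightarrow> complex) \<Rightarrow> int \<Rightarrow> int \<Rightarrow> complex" where
  "prod_weight w s t = gprod 1 t (w s)"

lemma binomial_weights_prod_weight: "(\<And>s t. w s t \<noteq> 0) \<Longrightarrow> binomial_weights (prod_weight w)"
  by unfold_locales (simp_all add: prod_weight_def gprod_nonzero)

lemma prod_weight_add: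
  assumes "\<And>s t. w s t \<noteq> 0"
  shows "prod_weight w s (t + u) = prod_weight w s t * prod_weight (\<lambda>s i. w s (i + t)) s u"
  using gprod_add[of "w s" t u] assms by (simp add: prod_weight_def)

context
  fixes w :: "int \<Rightarrow> int \<Rightarrow> complex" and n :: int
    and f :: "int \<Rightarrow> int \<Rightarrow> complex" and C :: "int \<Rightarrow> int \<Rightarrow> int \<Rightarrow> complex"
  assumes w_nonzero: "\<And>s t. w s t \<noteq> 0"
    and f_family: "binomial_family (prod_weight w) f"
    and C_family: "\<And>j. binomial_family (prod_weight (\<lambda>s i. w (s + j) (i + n - j))) (C j)"
begin

definition conv_term :: "int \<Rightarrow> int \<Rightarrow> int \<Rightarrow> complex" where
  "conv_term m k j = f n j * C j m (k - j) * gprod 1 (k - j) (\<lambda>i. prod_weight w (i + j) (n - j))"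

definition conv_sum :: "int \<Rightarrow> int \<Rightarrow> complex" where
  "conv_sum m k = gsum (k - m) n (conv_term m k)"

lemma conv_weight_split:
  "gprod 1 (k - j) (\<lambda>i. prod_weight w (i + j) (n - j))
     * prod_weight (\<lambda>s i. w (s + j) (i + n - j)) (k - j) (m + 1 - (k - j))
   = gprod 1 (k - 1 - j) (\<lambda>i. prod_weight w (i + j) (n - j)) * prod_weight w k (n + m + 1 - k)"
proof -
  have "gprod 1 (k - j) (\<lambda>i. prod_weight w (i + j) (n - j))
      = gprod 1 (k - 1 - j) (\<lambda>i. prod_weight w (i + j) (n - j)) * prod_weight w k (n - j)"
    using gprod_last[of "\<lambda>i. prod_weight w (i + j) (n - j)" 1 "k - j"]
      binomial_weights.W_nonzero[OF binomial_weights_prod_weight[OF w_nonzero]]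
    by (simp add: algebra_simps)
  moreover have "prod_weight w k (n + m + 1 - k)
      = prod_weight w k (n - j) * prod_weight (\<lambda>s i. w (s + j) (i + n - j)) (k - j) (m + 1 - (k - j))"
    using prod_weight_add[of w k "n - j" "m + 1 - (k - j)"] w_nonzero
    by (simp add: prod_weight_def algebra_simps)
  ultimately show ?thesis by simp
qed

text \<open>The correction term stems from the exempt instance \<open>(0, 0)\<close> of the recursion of \<open>C k\<close>.\<close>

lemma conv_term_step:
  "conv_term (m + 1) k j = conv_term m k j + conv_term m (k - 1) j * prod_weight w k (n + m + 1 - k)
     - (if m = -1 \<and> j = k then f n k else 0)"
proof -
  have shifted: "conv_term m (k - 1) j * prod_weight w k (n + m + 1 - k)
      = f n j * C j m (k - j - 1)
        * (gprod 1 (k - j) (\<lambda>i. prod_weight w (i + j) (n - j))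
           * prod_weight (\<lambda>s i. w (s + j) (i + n - j)) (k - j) (m + 1 - (k - j)))"
    unfolding conv_weight_split by (simp add: conv_term_def algebra_simps)
  show ?thesis
  proof (cases "m = -1 \<and> j = k")
    case True
    then show ?thesis
      using shifted family_diag[OF C_family[of k]] family_col_0[OF C_family[of k]]
      by (simp add: conv_term_def prod_weight_def)
  next
    case False
    then have "C j (m + 1) (k - j) = C j m (k - j)
        + C j m (k - j - 1) * prod_weight (\<lambda>s i. w (s + j) (i + n - j)) (k - j) (m + 1 - (k - j))"
      using family_rec[OF C_family[of j], of m "k - j"] by auto
    moreover have "(if m = -1 \<and> j = k then f n k else 0) = 0" by (rule if_not_P[OF False])
    ultimately show ?thesis
      unfolding shifted by (simp add: conv_term_def algebra_simps)
  qed
qed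

lemma conv_sum_step:
  assumes "k \<le> n + m"
  shows "conv_sum (m + 1) k = conv_sum m k + conv_sum m (k - 1) * prod_weight w k (n + m + 1 - k)"
proof -
  define E where "E = (\<lambda>j. if m = -1 \<and> j = k then f n k else 0)"
  have boundary: "conv_term m k (k - m - 1) = gsum (k - m - 1) n E"
  proof (cases "m = -1")
    case True
    then show ?thesis
      using assms family_col_0[OF C_family[of k]] gsum_delta[of k n "f n k"]
      by (simp add: conv_term_def E_def)
  next
    case False
    then have "C (k - m - 1) m (m + 1) = 0"
      using binomial_weights.family_above_diag[OF binomial_weights_prod_weight C_family] w_nonzero
      by blast
    with False show ?thesis by (simp add: conv_term_def E_def)
  qed
  have "conv_sum (m + 1) k
      = gsum (k - m - 1) n (\<lambda>j. conv_term m k j + conv_term m (k - 1) j * prod_weight w k (n + m + 1 - k) - E j)"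
    unfolding conv_sum_def E_def conv_term_step by (simp add: diff_diff_eq)
  also have "\<dots> = gsum (k - m - 1) n (conv_term m k)
      + gsum (k - m - 1) n (conv_term m (k - 1)) * prod_weight w k (n + m + 1 - k) - gsum (k - m - 1) n E"
    by (simp add: gsum_add gsum_diff gsum_mult_right)
  also have "gsum (k - m - 1) n (conv_term m k) = conv_term m k (k - m - 1) + conv_sum m k"
    unfolding conv_sum_def by (subst gsum_first) simp
  also have "gsum (k - m - 1) n (conv_term m (k - 1)) = conv_sum m (k - 1)"
    by (simp add: conv_sum_def algebra_simps)
  finally show ?thesis using boundary by simp
qed

lemma conv_sum_diag: "conv_sum m (n + m) = 1"
  using family_diag[OF f_family] family_diag[OF C_family[of n]]
  by (simp add: conv_sum_def conv_term_def gsum_singleton prod_weight_def)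

lemma conv_sum_0:
  assumes "k \<le> n"
  shows "conv_sum 0 k = f n k"
proof -
  have "conv_term 0 k = (\<lambda>j. if j = k then f n k else 0)"
    using binomial_weights.family_row_0[OF binomial_weights_prod_weight C_family] w_nonzero
    by (simp add: fun_eq_iff conv_term_def)
  then show ?thesis using gsum_delta[OF assms] by (simp add: conv_sum_def)
qed

lemma family_convolution:
  assumes "k \<le> n + m"
  shows "f (n + m) k =
    gsum (k - m) n (\<lambda>j. f n j * C j m (k - j) * gprod 1 (k - j) (\<lambda>i. prod_weight w (i + j) (n - j)))"
proof -
  have W: "prod_weight w s t \<noteq> 0" for s t
    using binomial_weights.W_nonzero[OF binomial_weights_prod_weight[OF w_nonzero]] .
  have f_rec: "f (N + 1) k = f N k + f N (k - 1) * prod_weight w k (N + 1 - k)" if "k \<le> N" for N k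
    using family_rec[OF f_family, of N k] that by auto
  have conv_rec: "conv_sum (N + 1 - n) k
      = conv_sum (N - n) k + conv_sum (N - n) (k - 1) * prod_weight w k (N + 1 - k)"
    if "k \<le> N" for N k
    using conv_sum_step[of k "N - n"] that by (simp add: algebra_simps)
  have diag: "f N N = conv_sum (N - n) N" for N
    using conv_sum_diag[of "N - n"] family_diag[OF f_family] by simp
  have row: "f n k = conv_sum (n - n) k" if "k \<le> n" for k
    using conv_sum_0[OF that] by simp
  have "f (n + m) k = conv_sum (n + m - n) k"
    using lower_triangle_eq[where W = "prod_weight w" and g = f and h = "\<lambda>N k. conv_sum (N - n) k",
        OF W f_rec conv_rec diag row assms] .
  then show ?thesis by (simp add: conv_sum_def conv_term_def[abs_def])
qed

end

section \<open>Elliptic binomial coefficients\<close>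

lemma ebinom_family_iff: "ebinom_family a b q p = binomial_family (eW a b q p)"
  by (simp add: fun_eq_iff ebinom_family_def binomial_family_def)

lemma eW_eq_prod_weight: "eW a b q p = prod_weight (ew a b q p)"
  by (simp add: fun_eq_iff eW_def prod_weight_def)

lemma ebinom_is_family:
  assumes "\<And>s t. ew a b q p s t \<noteq> 0"
  shows "binomial_family (prod_weight (ew a b q p)) (ebinom a b q p)"
proof -
  have "ebinom a b q p = (THE f. binomial_family (prod_weight (ew a b q p)) f)"
    by (simp add: fun_eq_iff ebinom_def ebinom_family_iff eW_eq_prod_weight)
  then show ?thesis
    using binomial_weights.the_family[OF binomial_weights_prod_weight[OF assms]] by simp
qed

lemma powi_mult_shift: "(q::complex) \<noteq> 0 \<Longrightarrow> x + y = z \<Longrightarrow> c * q powi x * q powi y = c * q powi z"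
  by (metis power_int_add mult.assoc)

lemma powi_divide_shift:
  assumes "(q::complex) \<noteq> 0" and "b \<noteq> 0" and "x + y - u = z"
  shows "a * q powi x * q powi y / (b * q powi u) = a * q powi z / b"
proof -
  have "q powi z = q powi x * q powi y / q powi u"
    using assms by (metis power_int_add power_int_diff)
  with assms(1,2) show ?thesis by (simp add: field_simps)
qed

lemma ew_shift:
  assumes q: "q \<noteq> 0" and b: "b \<noteq> 0"
  shows "ew (a * q powi (2 * n - j)) (b * q powi (n + j)) q p s t = ew a b q p (s + j) (t + n - j)"
proof -
  have "a * q powi (2 * n - j) * q powi (s + 2 * t) = a * q powi ((s + j) + 2 * (t + n - j))"
    and "a * q powi (2 * n - j) * q powi (s + 2 * t - 2) = a * q powi ((s + j) + 2 * (t + n - j) - 2)"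
    and "b * q powi (n + j) * q powi (2 * s + t - 2) = b * q powi (2 * (s + j) + (t + n - j) - 2)"
    and "b * q powi (n + j) * q powi (2 * s + t) = b * q powi (2 * (s + j) + (t + n - j))"
    by (rule powi_mult_shift[OF q], simp)+
  moreover have "a * q powi (2 * n - j) * q powi (t - s - 1) / (b * q powi (n + j))
      = a * q powi ((t + n - j) - (s + j) - 1) / b"
    and "a * q powi (2 * n - j) * q powi (t - s + 1) / (b * q powi (n + j))
      = a * q powi ((t + n - j) - (s + j) + 1) / b"
    by (rule powi_divide_shift[OF q b], simp)+
  ultimately show ?thesis unfolding ew_def by (simp only:)
qed

theorem corollary5:
  fixes n m k :: int and a b q p :: complex
  assumes "k \<le> n + m" and "norm p < 1"
    and "a \<noteq> 0" and "b \<noteq> 0" and "q \<noteq> 0"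
    and "\<And>r::int. theta p (a * q powi r) \<noteq> 0"
    and "\<And>r::int. theta p (b * q powi r) \<noteq> 0"
    and "\<And>r::int. theta p (a * q powi r / b) \<noteq> 0"
  shows "ebinom a b q p (n + m) k =
    gsum (k - m) n (\<lambda>j. ebinom a b q p n j
       * ebinom (a * q powi (2*n - j)) (b * q powi (n + j)) q p m (k - j)
       * gprod 1 (k - j) (\<lambda>i. eW a b q p (i + j) (n - j)))"
proof -
  have w: "ew a b q p s t \<noteq> 0" for s t
    using assms(5-8) by (simp add: ew_def)
  have shifted: "ew (a * q powi (2 * n - j)) (b * q powi (n + j)) q p
      = (\<lambda>s i. ew a b q p (s + j) (i + n - j))" for j
    using ew_shift[OF assms(5,4)] by (simp add: fun_eq_iff)
  have "binomial_family (prod_weight (\<lambda>s i. ew a b q p (s + j) (i + n - j)))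
      (ebinom (a * q powi (2 * n - j)) (b * q powi (n + j)) q p)" for j
    using ebinom_is_family[of "a * q powi (2 * n - j)" "b * q powi (n + j)" q p] w
    unfolding shifted by simp
  from family_convolution[OF w ebinom_is_family[OF w] this assms(1)]
  show ?thesis by (simp add: eW_eq_prod_weight)
qed

end
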